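(* Let $\mathscr{P}^{S_5}_\bullet$ be the group-action model associated with the Petersen graph, and let $\mathscr{Q}_\bullet$ be the family generated by $\mathscr{P}^{S_5}_2\cup\{\mathrm{GHZ}\}$. Then $\mathscr{Q}_\bullet=\mathscr{P}^{S_5}_\bullet$ if and only if the transposition $R$ belongs to $\mathscr{Q}_4$.
   Context: The Petersen graph $\Gamma$ is the Kneser graph $KG_{5,2}$: vertex set $V_\Gamma$ = the $2$-element subsets of $\{1,\dots,5\}$, adjacency = disjointness. Let $W=\mathbb{C}^{V_\Gamma}$ with basis $(e_v)_{v\in V_\Gamma}$; $S_5$ acts by $\pi\cdot e_{\{a,b\}}=e_{\{\pi(a),\pi(b)\}}$ and diagonally on $W^{\otimes n}$. Set $\mathscr{P}_0=\mathbb{C}$, $\mathscr{P}_n=W^{\otimes n}$, and $\mathscr{P}^{S_5}_n$ = the $S_5$-fixed vectors of $\mathscr{P}_n$. $\mathrm{GHZ}=\sum_{v}e_v\otimes e_v\otimes e_v$, $R=\sum_{u,v}e_u\otimes e_v\otimes e_u\otimes e_v$. Operations: tensor product; contraction $C_{k,k+1}:\mathscr{P}_n\to\mathscr{P}_{n-2}$, $C_{k,k+1}(e_{v_1}\otimes\cdots\otimes e_{v_n})=\delta_{v_k,v_{k+1}}e_{v_1}\otimes\cdots\otimes\widehat{e_{v_k}}\otimes\widehat{e_{v_{k+1}}}\otimes\cdots\otimes e_{v_n}$; rotation $\rho(e_{v_1}\otimes\cdots\otimes e_{v_n})=e_{v_2}\otimes\cdots\otimes e_{v_n}\otimes e_{v_1}$.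 The family generated by a set $X$ of tensors is the smallest family $(\mathscr{Q}_n)_{n\ge0}$ of linear subspaces $\mathscr{Q}_n\subseteq\mathscr{P}_n$ containing $X$, with $1\in\mathscr{Q}_0$, closed under tensor product, all contractions $C_{k,k+1}$, and rotation. *)

theory Defs
  imports Complex_Main "HOL-Combinatorics.Permutations"
begin

text \<open>Vertices of the Petersen graph: 2-element subsets of {1..5}.
  A tensor in W^(tensor n) is encoded by its coefficient function on words
  of vertices: the coefficient of e_v1 (x) ... (x) e_vn is T [v1,...,vn].\<close>

type_synonym vert = "nat set"
type_synonym tensor = "vert list \<Rightarrow> complex"

definition PV :: "vert set" where
  "PV = {A. A \<subseteq> {1..5} \<and> card A = 2}"

definition Pn :: "nat \<Rightarrow> tensor set" where
  "Pn n = {T. \<forall>xs. T xs \<noteq> 0 \<longrightarrow> length xs = n \<and> set xs \<subseteq> PV}"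

text \<open>Action of pi in S5 on tensors: pi . e_{a,b} = e_{pi a, pi b}, diagonally.\<close>
definition act :: "(nat \<Rightarrow> nat) \<Rightarrow> tensor \<Rightarrow> tensor" where
  "act \<pi> T = (\<lambda>xs. T (map (\<lambda>v. inv \<pi> ` v) xs))"

definition PS5 :: "nat \<Rightarrow> tensor set" where
  "PS5 n = {T \<in> Pn n. \<forall>\<pi>. \<pi> permutes {1..5::nat} \<longrightarrow> act \<pi> T = T}"

definition unit_tensor :: tensor where
  "unit_tensor = (\<lambda>xs. if xs = [] then 1 else 0)"

definition tprod :: "nat \<Rightarrow> tensor \<Rightarrow> tensor \<Rightarrow> tensor" where
  "tprod m S T = (\<lambda>xs. if m \<le> length xs then S (take m xs) * T (drop m xs) else 0)"

text \<open>Contraction C_{i+1,i+2} (0-indexed position i) of adjacent slots.\<close>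
definition contract :: "nat \<Rightarrow> tensor \<Rightarrow> tensor" where
  "contract i T = (\<lambda>ys. \<Sum>v\<in>PV. T (take i ys @ v # v # drop i ys))"

text \<open>Rotation rho(e_v1 (x) ... (x) e_vn) = e_v2 (x) ... (x) e_vn (x) e_v1.\<close>
definition rot :: "tensor \<Rightarrow> tensor" where
  "rot T = (\<lambda>xs. if xs = [] then T [] else T (last xs # butlast xs))"

inductive gen :: "(nat \<times> tensor) set \<Rightarrow> nat \<Rightarrow> tensor \<Rightarrow> bool" for X where
  gen_base: "(n, T) \<in> X \<Longrightarrow> gen X n T"
| gen_unit: "gen X 0 unit_tensor"
| gen_zero: "gen X n (\<lambda>_. 0)"
| gen_add: "gen X n S \<Longrightarrow> gen X n T \<Longrightarrow> gen X n (\<lambda>xs. S xs + T xs)"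
| gen_scale: "gen X n T \<Longrightarrow> gen X n (\<lambda>xs. c * T xs)"
| gen_tprod: "gen X m S \<Longrightarrow> gen X k T \<Longrightarrow> gen X (m + k) (tprod m S T)"
| gen_contract: "gen X n T \<Longrightarrow> i + 2 \<le> n \<Longrightarrow> gen X (n - 2) (contract i T)"
| gen_rot: "gen X n T \<Longrightarrow> gen X n (rot T)"

definition GHZ :: tensor where
  "GHZ = (\<lambda>xs. if length xs = 3 \<and> xs ! 0 \<in> PV \<and> xs ! 1 = xs ! 0 \<and> xs ! 2 = xs ! 0
               then 1 else 0)"

definition Rt :: tensor where
  "Rt = (\<lambda>xs. if length xs = 4 \<and> set xs \<subseteq> PV \<and> xs ! 2 = xs ! 0 \<and> xs ! 3 = xs ! 1
               then 1 else 0)"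

definition Qfam :: "nat \<Rightarrow> tensor set" where
  "Qfam n = {T. gen ({(2, T) | T. T \<in> PS5 2} \<union> {(3, GHZ)}) n T}"

end

theory Submission
  imports Defs
begin

text \<open>
  One direction is immediate: the generators are \<open>S\<^sub>5\<close>-invariant and every operation of a
  family is equivariant, so all generated tensors are invariant, and \<open>R\<close> is invariant.

  Conversely, contracting the last two slots of \<open>T \<otimes> R\<close> swaps them, and conjugating with
  rotations makes the family closed under all adjacent transpositions of slots. Contracting
  with \<open>GHZ\<close> duplicates a slot, so we can copy any two slots and contract them against the
  adjacency or non-adjacency matrix of the Petersen graph. Multiplying these factors over all
  pairs of vertices gives the indicator of the words \<open>z \<in> V\<^bsup>V\<^esup>\<close> that are graph
  automorphisms, and every automorphism of \<open>KG\<^sub>5\<^sub>,\<^sub>2\<close> is induced by a permutation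
  of \<open>{1..5}\<close>. Copying slots of this indicator and summing out \<open>z\<close> yields, for each
  word \<open>x\<close>, the tensor \<open>y \<mapsto> #{\<sigma> \<in> Aut. \<sigma> x = y}\<close>; an invariant \<open>T\<close> is the
  combination \<open>\<Sum>\<^sub>x T x / |Aut| \<cdot> #{\<sigma>. \<sigma> x = y}\<close> of these.
\<close>

section \<open>Supports and invariance of generated tensors\<close>

definition words :: "nat \<Rightarrow> vert list set" where
  "words n = {xs. length xs = n \<and> set xs \<subseteq> PV}"

lemma length_in_words: "xs \<in> words n \<Longrightarrow> length xs = n"
  by (simp add: words_def)

lemma in_Pn_iff: "T \<in> Pn n \<longleftrightarrow> (\<forall>xs. xs \<notin> words n \<longrightarrow> T xs = 0)"
  unfolding Pn_def words_def by blast

lemma finite_PV: "finite PV"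
  by (rule finite_subset[of _ "Pow {1..5}"]) (auto simp: PV_def)

lemma finite_words: "finite (words n)"
  using finite_lists_length_eq[OF finite_PV, of n] by (simp add: words_def conj_commute)

lemma PV_not_empty: "A \<in> PV \<Longrightarrow> A \<noteq> {}"
  unfolding PV_def by auto

lemma image_in_PV:
  assumes "\<sigma> permutes {1..5::nat}" and "v \<in> PV"
  shows "\<sigma> ` v \<in> PV"
  using assms permutes_image[OF assms(1)] card_image[OF inj_on_subset[OF permutes_inj[OF assms(1)]]]
  unfolding PV_def by auto

lemma inv_image_in_PV_iff:
  assumes "\<pi> permutes {1..5::nat}"
  shows "inv \<pi> ` v \<in> PV \<longleftrightarrow> v \<in> PV"
proof
  show "inv \<pi> ` v \<in> PV \<Longrightarrow> v \<in> PV"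
    using image_in_PV[OF assms, of "inv \<pi> ` v"]
    by (simp add: image_comp permutes_inverses(1)[OF assms] comp_def)
qed (rule image_in_PV[OF permutes_inv[OF assms]])

lemma act_GHZ:
  assumes "\<pi> permutes {1..5::nat}" shows "act \<pi> GHZ = GHZ"
  using permutes_inj[OF permutes_inv[OF assms]] assms
  by (auto simp: fun_eq_iff act_def GHZ_def inv_image_in_PV_iff inj_image_eq_iff)

lemma act_Rt:
  assumes "\<pi> permutes {1..5::nat}" shows "act \<pi> Rt = Rt"
  using permutes_inj[OF permutes_inv[OF assms]] assms
  by (auto simp: fun_eq_iff act_def Rt_def inv_image_in_PV_iff inj_image_eq_iff)

lemma bij_betw_image_PV:
  assumes "\<sigma> permutes {1..5::nat}"
  shows "bij_betw ((`) \<sigma>) PV PV"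
  by (rule bij_betw_byWitness[where f' = "(`) (inv \<sigma>)"])
    (auto simp: image_comp comp_def permutes_inverses[OF assms] image_in_PV[OF assms]
        image_in_PV[OF permutes_inv[OF assms]])

lemma append_in_words: "xs \<in> words m \<Longrightarrow> ys \<in> words k \<Longrightarrow> xs @ ys \<in> words (m + k)"
  by (auto simp: words_def)

lemma tprod_in_Pn:
  assumes "S \<in> Pn m" "T \<in> Pn k"
  shows "tprod m S T \<in> Pn (m + k)"
proof -
  have "xs \<in> words (m + k)" if "tprod m S T xs \<noteq> 0" for xs
  proof -
    have "S (take m xs) \<noteq> 0" "T (drop m xs) \<noteq> 0"
      using that by (simp_all add: tprod_def split: if_splits)
    then have "take m xs \<in> words m" "drop m xs \<in> words k"
      using assms unfolding in_Pn_iff by blast+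
    from append_in_words[OF this] show ?thesis by simp
  qed
  then show ?thesis unfolding in_Pn_iff by blast
qed

lemma contract_in_Pn:
  assumes "T \<in> Pn n"
  shows "contract i T \<in> Pn (n - 2)"
proof -
  have "ys \<in> words (n - 2)" if nz: "contract i T ys \<noteq> 0" for ys
  proof -
    obtain v where "v \<in> PV" "T (take i ys @ v # v # drop i ys) \<noteq> 0"
      using nz unfolding contract_def by (rule sum.not_neutral_contains_not_neutral)
    then have "take i ys @ v # v # drop i ys \<in> words n"
      using assms unfolding in_Pn_iff by blast
    then show ?thesis
      using set_append[of "take i ys" "drop i ys"] unfolding words_def by auto
  qed
  then show ?thesis unfolding in_Pn_iff by blast
qed

lemma last_Cons_butlast_eq_rotate: "xs \<noteq> [] \<Longrightarrow> last xs # butlast xs = rotate (length xs - 1) xs"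
  using rotate_append[of "butlast xs" "[last xs]"] by simp

lemma rot_eq_rotate: "rot T xs = T (rotate (length xs - 1) xs)"
  by (cases "xs = []") (simp_all add: rot_def last_Cons_butlast_eq_rotate)

lemma rotate_in_words_iff [simp]: "rotate k xs \<in> words n \<longleftrightarrow> xs \<in> words n"
  by (simp add: words_def)

lemma rot_in_Pn:
  assumes "T \<in> Pn n"
  shows "rot T \<in> Pn n"
  using assms unfolding in_Pn_iff rot_eq_rotate by simp

lemma gen_in_Pn:
  assumes "\<And>n T. (n, T) \<in> X \<Longrightarrow> T \<in> Pn n"
  shows "gen X n T \<Longrightarrow> T \<in> Pn n"
proof (induction rule: gen.induct)
  case (gen_base n T)
  then show ?case by (rule assms)
next
  case gen_unit
  then show ?case by (auto simp: in_Pn_iff unit_tensor_def words_def)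
next
  case (gen_tprod m S k T)
  then show ?case by (intro tprod_in_Pn)
next
  case (gen_contract n T i)
  then show ?case by (intro contract_in_Pn)
next
  case (gen_rot n T)
  then show ?case by (intro rot_in_Pn)
next
  case (gen_add n S T)
  then show ?case unfolding in_Pn_iff by simp
next
  case (gen_scale n T c)
  then show ?case unfolding in_Pn_iff by simp
qed (simp add: in_Pn_iff)

lemma act_gen_eq:
  assumes "\<And>n T. (n, T) \<in> X \<Longrightarrow> act \<pi> T = T" and \<pi>: "\<pi> permutes {1..5::nat}"
  shows "gen X n T \<Longrightarrow> act \<pi> T = T"
proof (induction rule: gen.induct)
  case (gen_base n T)
  then show ?case by (rule assms)
next
  case (gen_tprod m S k T)
  then show ?case
    by (simp add: fun_eq_iff act_def tprod_def take_map drop_map)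
next
  case (gen_contract n T i)
  let ?g = "(`) (inv \<pi>)"
  have T: "T (map ?g xs) = T xs" for xs
    using fun_cong[OF gen_contract.IH, of xs] by (simp add: act_def)
  have "act \<pi> (contract i T) ys = contract i T ys" for ys
  proof -
    have "act \<pi> (contract i T) ys = (\<Sum>u\<in>PV. T (map ?g (take i ys) @ u # u # map ?g (drop i ys)))"
      unfolding act_def contract_def by (simp add: take_map drop_map)
    also have "\<dots> = (\<Sum>v\<in>PV. T (map ?g (take i ys) @ ?g v # ?g v # map ?g (drop i ys)))"
      by (rule sum.reindex_bij_betw[OF bij_betw_image_PV[OF permutes_inv[OF \<pi>]], symmetric])
    also have "\<dots> = contract i T ys"
      unfolding contract_def using T[of "take i ys @ v # v # drop i ys" for v] by simp
    finally show ?thesis .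
  qed
  then show ?case ..
next
  case (gen_rot n T)
  then show ?case
    by (simp add: fun_eq_iff act_def rot_eq_rotate rotate_map)
next
  case (gen_add n S T)
  then show ?case by (simp add: act_def fun_eq_iff)
next
  case (gen_scale n T c)
  then show ?case by (simp add: act_def fun_eq_iff)
qed (simp_all add: act_def unit_tensor_def)

lemma GHZ_in_PS5: "GHZ \<in> PS5 3"
proof -
  have "xs \<in> words 3" if "GHZ xs \<noteq> 0" for xs
  proof -
    have "length xs = 3" "xs ! 0 \<in> PV" "xs ! 1 = xs ! 0" "xs ! 2 = xs ! 0"
      using that by (simp_all add: GHZ_def split: if_splits)
    then show ?thesis
      by (auto simp: words_def numeral_eq_Suc length_Suc_conv)
  qed
  then show ?thesis
    using act_GHZ unfolding PS5_def in_Pn_iff by blast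
qed

lemma Rt_in_PS5: "Rt \<in> PS5 4"
  using act_Rt by (auto simp: PS5_def in_Pn_iff Rt_def words_def)

lemma gen_subset_PS5:
  assumes "\<And>n T. (n, T) \<in> X \<Longrightarrow> T \<in> PS5 n"
  shows "gen X n T \<Longrightarrow> T \<in> PS5 n"
  using gen_in_Pn[of X] act_gen_eq[of X] assms unfolding PS5_def by blast

section \<open>Closure properties of generated families\<close>

lemma sum_sum_delta:
  fixes f :: "'a \<Rightarrow> 'a \<Rightarrow> 'b::comm_monoid_add"
  assumes "finite A" "s \<in> A" "r \<in> A"
  shows "(\<Sum>a\<in>A. \<Sum>b\<in>A. if a = s \<and> b = r then f a b else 0) = f s r"
proof -
  have "(\<Sum>a\<in>A. \<Sum>b\<in>A. if a = s \<and> b = r then f a b else 0)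
      = (\<Sum>a\<in>A. if a = s then \<Sum>b\<in>A. if b = r then f a b else 0 else 0)"
    by (intro sum.cong) auto
  then show ?thesis
    using assms by simp
qed

lemma gen_sum:
  assumes "finite A" "\<And>a. a \<in> A \<Longrightarrow> gen X n (f a)"
  shows "gen X n (\<lambda>y. \<Sum>a\<in>A. c a * f a y)"
  using assms
proof (induction A rule: finite_induct)
  case empty
  then show ?case by (simp add: gen_zero)
next
  case (insert a A)
  then show ?case
    by (simp add: gen_add gen_scale)
qed

lemma rot_funpow: "(rot ^^ j) T xs = T (rotate (j * (length xs - 1)) xs)"
proof (induction j arbitrary: xs)
  case (Suc j)
  have "(rot ^^ Suc j) T xs = (rot ^^ j) T (rotate (length xs - 1) xs)"
    by (simp only: funpow.simps comp_apply rot_eq_rotate)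
  also have "\<dots> = T (rotate (Suc j * (length xs - 1)) xs)"
    by (simp add: Suc rotate_rotate add.commute)
  finally show ?case .
qed simp

lemma mod_mult_pred_pred: "0 < n \<Longrightarrow> (c * (n - 1) * (n - 1)) mod n = c mod (n::nat)"
proof (cases "n \<le> 1")
  case False
  then obtain k where "n = Suc (Suc k)"
    using less_imp_Suc_add[of 1 n] by auto
  then have "c * (n - 1) * (n - 1) = c + n * (c * k)"
    by (simp add: algebra_simps)
  then show ?thesis by simp
qed (auto simp: le_Suc_eq)

definition swap_adj :: "nat \<Rightarrow> 'a list \<Rightarrow> 'a list" where
  "swap_adj k xs = xs[k := xs ! Suc k, Suc k := xs ! k]"

lemma length_swap_adj [simp]: "length (swap_adj k xs) = length xs"
  by (simp add: swap_adj_def)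

lemma set_swap_adj: "Suc k < length xs \<Longrightarrow> set (swap_adj k xs) = set xs"
  by (simp add: swap_adj_def set_swap)

lemma nth_swap_adj:
  "Suc k < length xs \<Longrightarrow> i < length xs \<Longrightarrow>
    swap_adj k xs ! i = (if i = k then xs ! Suc k else if i = Suc k then xs ! k else xs ! i)"
  by (simp add: swap_adj_def nth_list_update)

lemma swap_adj_in_words_iff: "Suc k < n \<Longrightarrow> swap_adj k xs \<in> words n \<longleftrightarrow> xs \<in> words n"
  by (cases "length xs = n") (simp_all add: words_def set_swap_adj)

lemma swap_adj_append: "length ys = k \<Longrightarrow> swap_adj k (ys @ [r, s]) = ys @ [s, r]"
  by (simp add: swap_adj_def list_update_append nth_append)

lemma swap_adj_swap_adj: "Suc k < length xs \<Longrightarrow> swap_adj k (swap_adj k xs) = xs"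
  by (rule nth_equalityI) (auto simp: nth_swap_adj)

lemma rotate1_swap_adj:
  "Suc (Suc k) < length xs \<Longrightarrow> rotate1 (swap_adj (Suc k) xs) = swap_adj k (rotate1 xs)"
  by (cases xs) (simp_all add: swap_adj_def list_update_append nth_append)

lemma butlast_swap_adj: "Suc k < length xs - 1 \<Longrightarrow> butlast (swap_adj k xs) = swap_adj k (butlast xs)"
  by (rule nth_equalityI) (auto simp: nth_swap_adj nth_butlast)

lemma last_swap_adj: "Suc k < length xs - 1 \<Longrightarrow> last (swap_adj k xs) = last xs"
proof -
  assume k: "Suc k < length xs - 1"
  then have "swap_adj k xs \<noteq> []" "xs \<noteq> []"
    by (auto simp flip: length_greater_0_conv)
  then show ?thesis
    using k by (simp add: last_conv_nth nth_swap_adj)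
qed

lemma obtain_last_two:
  assumes "length xs = Suc (Suc m)"
  obtains y r s where "xs = y @ [r, s]" "length y = m"
proof -
  obtain ys s where "xs = ys @ [s]" "length ys = Suc m"
    using assms by (metis length_Suc_conv_rev)
  moreover obtain y r where "ys = y @ [r]" "length y = m"
    using calculation(2) by (metis length_Suc_conv_rev)
  ultimately show ?thesis
    using that by simp
qed

lemma gen_rot_funpow: "gen X n T \<Longrightarrow> gen X n ((rot ^^ j) T)"
  by (induction j) (simp_all add: gen_rot)

locale supported_family =
  fixes X :: "(nat \<times> tensor) set"
  assumes X_in_Pn: "(n, T) \<in> X \<Longrightarrow> T \<in> Pn n"
begin

lemma gen_Pn: "gen X n T \<Longrightarrow> T \<in> Pn n"
  by (rule gen_in_Pn[OF X_in_Pn])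

lemma gen_eqI:
  assumes "gen X n T" "T' \<in> Pn n" "\<And>xs. xs \<in> words n \<Longrightarrow> T xs = T' xs"
  shows "gen X n T'"
proof -
  have "T = T'"
  proof
    show "T xs = T' xs" for xs
      using gen_Pn[OF assms(1)] assms(2,3) unfolding in_Pn_iff by (cases "xs \<in> words n") simp_all
  qed
  then show ?thesis
    using assms(1) by simp
qed

lemma gen_precomp_eqI:
  assumes "gen X n S" "gen X n T" "\<And>xs. f xs \<in> words n \<Longrightarrow> xs \<in> words n"
    and "\<And>xs. xs \<in> words n \<Longrightarrow> S xs = T (f xs)"
  shows "gen X n (\<lambda>xs. T (f xs))"
proof (rule gen_eqI[OF assms(1)])
  show "(\<lambda>xs. T (f xs)) \<in> Pn n"
    using gen_Pn[OF assms(2)] assms(3) unfolding in_Pn_iff by blast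
qed (use assms(4) in simp)

lemma gen_contract_pair:
  assumes "gen X (Suc (Suc n)) S" "gen X 2 M"
  shows "gen X n (\<lambda>y. \<Sum>a\<in>PV. \<Sum>b\<in>PV. S (y @ [a, b]) * M [b, a])"
proof (rule gen_eqI)
  let ?U = "tprod (Suc (Suc n)) S M"
  have "gen X (Suc (Suc n) + 2 - 2 - 2) (contract n (contract (Suc n) ?U))"
    using assms by (intro gen_contract gen_tprod) simp_all
  then show "gen X n (contract n (contract (Suc n) ?U))"
    by simp
  show "contract n (contract (Suc n) ?U) y = (\<Sum>a\<in>PV. \<Sum>b\<in>PV. S (y @ [a, b]) * M [b, a])"
    if "y \<in> words n" for y
    using that unfolding contract_def tprod_def words_def by simp
  have "y \<in> words n" if nz: "(\<Sum>a\<in>PV. \<Sum>b\<in>PV. S (y @ [a, b]) * M [b, a]) \<noteq> 0" for y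
  proof -
    obtain a where "(\<Sum>b\<in>PV. S (y @ [a, b]) * M [b, a]) \<noteq> 0"
      using nz by (rule sum.not_neutral_contains_not_neutral)
    then obtain b where "b \<in> PV" "S (y @ [a, b]) * M [b, a] \<noteq> 0"
      by (rule sum.not_neutral_contains_not_neutral)
    then have "y @ [a, b] \<in> words (Suc (Suc n))"
      using gen_Pn[OF assms(1)] unfolding in_Pn_iff by auto
    then show ?thesis
      by (simp add: words_def)
  qed
  then show "(\<lambda>y. \<Sum>a\<in>PV. \<Sum>b\<in>PV. S (y @ [a, b]) * M [b, a]) \<in> Pn n"
    unfolding in_Pn_iff by blast
qed

text \<open>
  \<open>rot\<close> rotates by \<open>n - 1\<close> and \<open>(n - 1)\<^sup>2 \<equiv> 1 (mod n)\<close>, so \<open>rot\<^bsup>c(n-1)\<^esup>\<close>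
  rotates by \<open>c\<close>.
\<close>

lemma gen_rotate:
  assumes "gen X n T"
  shows "gen X n (\<lambda>xs. T (rotate c xs))"
proof (rule gen_precomp_eqI)
  show "gen X n ((rot ^^ (c * (n - 1))) T)"
    using assms by (rule gen_rot_funpow)
  show "(rot ^^ (c * (n - 1))) T xs = T (rotate c xs)" if "xs \<in> words n" for xs
  proof -
    have "length xs = n"
      using that by (simp add: words_def)
    then have "rotate (c * (n - 1) * (n - 1)) xs = rotate c xs"
      using mod_mult_pred_pred[of n c] by (cases "n = 0") (simp, subst (1 2) rotate_conv_mod, simp)
    then show ?thesis
      by (simp add: rot_funpow \<open>length xs = n\<close>)
  qed
qed (use assms in \<open>simp_all add: words_def\<close>)

end

locale symmetric_family = supported_family +
  assumes gen_Rt: "gen X 4 Rt"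
begin

lemma contract_contract_tprod_Rt:
  assumes "length y = m" "r \<in> PV" "t \<in> PV"
  shows "contract m (contract (Suc m) (tprod (Suc (Suc m)) T Rt)) (y @ [r, t]) = T (y @ [t, r])"
proof -
  have "contract m (contract (Suc m) (tprod (Suc (Suc m)) T Rt)) (y @ [r, t])
      = (\<Sum>a\<in>PV. \<Sum>b\<in>PV. tprod (Suc (Suc m)) T Rt (y @ [a, b, b, a, r, t]))"
    unfolding contract_def using assms(1) by simp
  also have "\<dots> = (\<Sum>a\<in>PV. \<Sum>b\<in>PV. if a = t \<and> b = r then T (y @ [a, b]) else 0)"
    using assms by (intro sum.cong refl) (auto simp: tprod_def Rt_def)
  also have "\<dots> = T (y @ [t, r])"
    using assms by (simp add: sum_sum_delta finite_PV)
  finally show ?thesis .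
qed

text \<open>Contracting the last two slots of \<open>T \<otimes> R\<close> swaps them.\<close>

lemma gen_swap_last:
  assumes "gen X n T" and n: "n = Suc (Suc k)"
  shows "gen X n (\<lambda>xs. T (swap_adj k xs))"
proof (rule gen_precomp_eqI[OF _ assms(1)])
  have "gen X (n + 4 - 2 - 2) (contract k (contract (Suc k) (tprod n T Rt)))"
    using assms(1) gen_Rt n by (intro gen_contract gen_tprod) simp_all
  then show "gen X n (contract k (contract (Suc k) (tprod n T Rt)))"
    by simp
  show "contract k (contract (Suc k) (tprod n T Rt)) xs = T (swap_adj k xs)" if xs: "xs \<in> words n" for xs
  proof -
    obtain y r t where "xs = y @ [r, t]" "length y = k"
      using xs n obtain_last_two unfolding words_def by blast
    then show ?thesis
      using xs n by (simp add: contract_contract_tprod_Rt swap_adj_append words_def)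
  qed
qed (use n swap_adj_in_words_iff in auto)

text \<open>Conjugating with a rotation moves a swap of adjacent slots one position to the left.\<close>

lemma gen_swap_adj:
  assumes "gen X n T" "Suc k < n"
  shows "gen X n (\<lambda>xs. T (swap_adj k xs))"
proof -
  have "k \<le> n - 2"
    using assms(2) by simp
  then show ?thesis
    using assms(1)
  proof (induction k arbitrary: T rule: inc_induct)
    case base
    then show ?case
      using assms(2) by (intro gen_swap_last) simp_all
  next
    case (step k)
    have "gen X n (\<lambda>xs. T (rotate 1 xs))"
      by (rule gen_rotate[OF step.prems])
    then have "gen X n (\<lambda>xs. T (rotate 1 (swap_adj (Suc k) xs)))"
      by (rule step.IH)
    then have "gen X n (\<lambda>xs. T (rotate 1 (swap_adj (Suc k) (rotate (n - 1) xs))))"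
      by (rule gen_rotate)
    then show ?case
    proof (rule gen_precomp_eqI[OF _ step.prems])
      show "xs \<in> words n" if "swap_adj k xs \<in> words n" for xs
        using that step.hyps swap_adj_in_words_iff by simp
      show "T (rotate 1 (swap_adj (Suc k) (rotate (n - 1) xs))) = T (swap_adj k xs)"
        if "xs \<in> words n" for xs
      proof -
        have "length xs = n"
          using that by (simp add: words_def)
        then have "rotate1 (rotate (n - 1) xs) = rotate n xs"
          using step.hyps rotate_Suc[of "n - 1" xs] by simp
        then have "rotate1 (rotate (n - 1) xs) = xs"
          using \<open>length xs = n\<close> by simp
        then show ?thesis
          using step.hyps \<open>length xs = n\<close> rotate1_swap_adj[of k "rotate (n - 1) xs"] by simp
      qed
    qed
  qed
qed

end

definition copy_slot :: "nat \<Rightarrow> nat \<Rightarrow> tensor \<Rightarrow> tensor" where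
  "copy_slot n j T = (\<lambda>zs. if zs \<in> words (Suc n) \<and> last zs = zs ! j then T (butlast zs) else 0)"

definition ones :: "nat \<Rightarrow> tensor" where
  "ones n = (\<lambda>xs. if xs \<in> words n then 1 else 0)"

lemma copy_slot_swap_adj:
  assumes "Suc j < n"
  shows "copy_slot n (Suc j) (\<lambda>xs. T (swap_adj j xs)) (swap_adj j zs) = copy_slot n j T zs"
proof (cases "length zs = Suc n")
  case True
  then have "Suc j < length zs - 1"
    using assms by simp
  then show ?thesis
    using True assms by (simp add: copy_slot_def swap_adj_in_words_iff last_swap_adj
        butlast_swap_adj nth_swap_adj swap_adj_swap_adj)
qed (simp add: copy_slot_def words_def)

lemma copy_slot_copy_slot_append:
  assumes "y \<in> words n" "p < n" "q < n" "a \<in> PV" "b \<in> PV"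
  shows "copy_slot (Suc n) q (copy_slot n p T) (y @ [a, b]) = (if a = y ! p \<and> b = y ! q then T y else 0)"
proof -
  have "y @ [a, b] \<in> words (Suc (Suc n))" "y @ [a] \<in> words (Suc n)"
    using assms by (auto simp: words_def)
  moreover have "butlast (y @ [a, b]) = y @ [a]" "length y = n"
    using assms(1) by (simp_all add: butlast_append words_def)
  ultimately have "copy_slot (Suc n) q (copy_slot n p T) (y @ [a, b])
      = (if b = y ! q then copy_slot n p T (y @ [a]) else 0)"
    using assms(3) unfolding copy_slot_def[of "Suc n" q] by (simp add: nth_append butlast_append)
  also have "copy_slot n p T (y @ [a]) = (if a = y ! p then T y else 0)"
    using \<open>y @ [a] \<in> words (Suc n)\<close> \<open>length y = n\<close> assms(2) by (simp add: copy_slot_def nth_append)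
  finally show ?thesis
    by simp
qed

lemma copy_slot_in_Pn: "copy_slot n j T \<in> Pn (Suc n)"
  by (simp add: copy_slot_def in_Pn_iff)

locale ghz_family = supported_family +
  assumes GHZ_in_X: "(3, GHZ) \<in> X"
begin

lemma gen_GHZ: "gen X 3 GHZ"
  by (rule gen_base[OF GHZ_in_X])

text \<open>Contracting the last slot with \<open>GHZ\<close> duplicates it.\<close>

lemma gen_copy_last:
  assumes "gen X (Suc m) T"
  shows "gen X (Suc (Suc m)) (copy_slot (Suc m) m T)"
proof (rule gen_eqI[OF _ copy_slot_in_Pn])
  have "gen X (Suc m + 3 - 2) (contract m (tprod (Suc m) T GHZ))"
    using assms gen_GHZ by (intro gen_contract gen_tprod) simp_all
  then show "gen X (Suc (Suc m)) (contract m (tprod (Suc m) T GHZ))"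
    by simp
  show "contract m (tprod (Suc m) T GHZ) zs = copy_slot (Suc m) m T zs"
    if zs: "zs \<in> words (Suc (Suc m))" for zs
  proof -
    obtain y b c where yc: "zs = y @ [b, c]" "length y = m"
      using zs obtain_last_two unfolding words_def by blast
    then have "b \<in> PV"
      using zs by (simp add: words_def)
    have "contract m (tprod (Suc m) T GHZ) zs = (\<Sum>v\<in>PV. tprod (Suc m) T GHZ (y @ [v, v, b, c]))"
      unfolding contract_def yc using yc(2) by simp
    also have "\<dots> = (\<Sum>v\<in>PV. if v = b then (if c = b then T (y @ [b]) else 0) else 0)"
      using yc by (intro sum.cong refl) (auto simp: tprod_def GHZ_def nth_append)
    also have "\<dots> = copy_slot (Suc m) m T zs"
      using \<open>b \<in> PV\<close> zs yc finite_PV by (auto simp: copy_slot_def nth_append butlast_append)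
    finally show ?thesis .
  qed
qed

lemma gen_ones: "gen X n (ones n)"
proof (induction n)
  case 0
  have "ones 0 = unit_tensor"
    by (auto simp: ones_def unit_tensor_def words_def)
  then show ?case
    by (simp add: gen_unit)
next
  case (Suc n)
  have "contract 0 GHZ = ones 1"
  proof
    show "contract 0 GHZ ys = ones 1 ys" for ys
    proof (cases "\<exists>a. ys = [a]")
      case True
      then obtain a where "ys = [a]"
        by blast
      then show ?thesis
        by (simp add: contract_def GHZ_def ones_def words_def finite_PV)
    next
      case False
      then show ?thesis
        by (auto simp: contract_def GHZ_def ones_def words_def length_Suc_conv)
    qed
  qed
  then have "gen X 1 (ones 1)"
    using gen_contract[OF gen_GHZ, of 0] by simp
  then have "gen X (1 + n) (tprod 1 (ones 1) (ones n))"
    using Suc by (rule gen_tprod)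
  moreover have "tprod 1 (ones 1) (ones n) = ones (Suc n)"
  proof
    show "tprod 1 (ones 1) (ones n) xs = ones (Suc n) xs" for xs
      by (cases xs) (auto simp: tprod_def ones_def words_def)
  qed
  ultimately show ?case
    by simp
qed

lemma gen_sum_head:
  assumes "gen X (Suc n) T"
  shows "gen X n (\<lambda>y. \<Sum>v\<in>PV. T (v # y))"
proof -
  have "gen X (1 + Suc n - 2) (contract 0 (tprod 1 (ones 1) T))"
    using gen_ones assms by (intro gen_contract gen_tprod) simp_all
  moreover have "contract 0 (tprod 1 (ones 1) T) = (\<lambda>y. \<Sum>v\<in>PV. T (v # y))"
    by (auto simp: fun_eq_iff contract_def tprod_def ones_def words_def)
  ultimately show ?thesis
    by simp
qed

lemma sum_words_Suc: "(\<Sum>z\<in>words (Suc m). f z) = (\<Sum>z\<in>words m. \<Sum>v\<in>PV. f (v # z))"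
proof -
  have "words (Suc m) = (\<lambda>(v, z). v # z) ` (PV \<times> words m)"
    by (auto simp: words_def length_Suc_conv image_iff)
  moreover have "inj_on (\<lambda>(v, z). v # z) (PV \<times> words m)"
    by (auto simp: inj_on_def)
  ultimately have "(\<Sum>z\<in>words (Suc m). f z) = (\<Sum>(v, z)\<in>PV \<times> words m. f (v # z))"
    by (simp add: sum.reindex case_prod_beta')
  also have "\<dots> = (\<Sum>z\<in>words m. \<Sum>v\<in>PV. f (v # z))"
    by (simp add: sum.cartesian_product[symmetric] sum.swap[of _ PV])
  finally show ?thesis .
qed

lemma gen_sum_prefix: "gen X (m + n) T \<Longrightarrow> gen X n (\<lambda>y. \<Sum>z\<in>words m. T (z @ y))"
proof (induction m arbitrary: T)
  case 0
  have "words 0 = {[]}"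
    by (auto simp: words_def)
  then show ?case
    using 0 by simp
next
  case (Suc m)
  have "gen X (m + n) (\<lambda>y. \<Sum>v\<in>PV. T (v # y))"
    using Suc.prems by (intro gen_sum_head) simp
  then show ?case
    using Suc.IH by (simp add: sum_words_Suc)
qed

end

locale ghz_symmetric_family = ghz_family + symmetric_family
begin

lemma gen_copy_slot:
  assumes "gen X n T" "j < n"
  shows "gen X (Suc n) (copy_slot n j T)"
proof -
  have "j \<le> n - 1"
    using assms(2) by simp
  then show ?thesis
    using assms(1)
  proof (induction j arbitrary: T rule: inc_induct)
    case base
    obtain m where "n = Suc m"
      using assms(2) gr0_implies_Suc by force
    then show ?case
      using gen_copy_last[of m T] base by simp
  next
    case (step j)
    have "gen X n (\<lambda>xs. T (swap_adj j xs))"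
      using step.hyps(2) by (intro gen_swap_adj[OF step.prems]) simp
    then have "gen X (Suc n) (copy_slot n (Suc j) (\<lambda>xs. T (swap_adj j xs)))"
      by (rule step.IH)
    then have "gen X (Suc n) (\<lambda>zs. copy_slot n (Suc j) (\<lambda>xs. T (swap_adj j xs)) (swap_adj j zs))"
      by (rule gen_swap_adj) (use step.hyps(2) in simp)
    then show ?case
      using step.hyps(2) by (simp add: copy_slot_swap_adj)
  qed
qed

lemma gen_mult_slots:
  assumes "gen X n T" "p < n" "q < n" "gen X 2 M"
  shows "gen X n (\<lambda>y. T y * M [y ! q, y ! p])"
proof (rule gen_eqI)
  let ?S = "copy_slot (Suc n) q (copy_slot n p T)"
  have "gen X (Suc (Suc n)) ?S"
    using assms by (intro gen_copy_slot) simp_all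
  then show "gen X n (\<lambda>y. \<Sum>a\<in>PV. \<Sum>b\<in>PV. ?S (y @ [a, b]) * M [b, a])"
    using assms(4) by (rule gen_contract_pair)
  show "(\<lambda>y. T y * M [y ! q, y ! p]) \<in> Pn n"
    using gen_Pn[OF assms(1)] by (simp add: in_Pn_iff)
  show "(\<Sum>a\<in>PV. \<Sum>b\<in>PV. ?S (y @ [a, b]) * M [b, a]) = T y * M [y ! q, y ! p]"
    if y: "y \<in> words n" for y
  proof -
    have "y ! p \<in> PV" "y ! q \<in> PV"
      using y assms(2,3) by (auto simp: words_def)
    have "(\<Sum>a\<in>PV. \<Sum>b\<in>PV. ?S (y @ [a, b]) * M [b, a])
        = (\<Sum>a\<in>PV. \<Sum>b\<in>PV. if a = y ! p \<and> b = y ! q then T y * M [b, a] else 0)"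
      using y assms(2,3) by (intro sum.cong refl) (simp add: copy_slot_copy_slot_append)
    also have "\<dots> = T y * M [y ! q, y ! p]"
      using \<open>y ! p \<in> PV\<close> \<open>y ! q \<in> PV\<close> by (simp add: sum_sum_delta finite_PV)
    finally show ?thesis .
  qed
qed

end

section \<open>Automorphisms of the Petersen graph\<close>

lemma doubleton_in_PV: "x \<in> {1..5} \<Longrightarrow> y \<in> {1..5} \<Longrightarrow> x \<noteq> y \<Longrightarrow> {x, y} \<in> PV"
  by (simp add: PV_def)

lemma card_2_eqI: "card C = 2 \<Longrightarrow> a \<in> C \<Longrightarrow> b \<in> C \<Longrightarrow> a \<noteq> b \<Longrightarrow> C = {a, b}"
  by (auto simp: card_2_iff)

lemma card_2_obtain_other:
  assumes "card A = 2" "i \<in> A"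
  obtains a where "A = {i, a}" "a \<noteq> i"
  using assms by (auto simp: card_2_iff doubleton_eq_iff)

lemma triangle_third_side:
  assumes A: "A = {i, a}" and B: "B = {i, b}" and "a \<noteq> b" "a \<noteq> i" "b \<noteq> i"
    and "card C = 2" "card D = 2" "C \<noteq> A" "C \<noteq> B" "D \<noteq> A" "D \<noteq> B" "C \<noteq> D"
    and "C \<inter> A \<noteq> {}" "C \<inter> B \<noteq> {}" "D \<inter> A \<noteq> {}" "D \<inter> B \<noteq> {}" "C \<inter> D \<noteq> {}"
  shows "i \<in> C"
proof (rule ccontr)
  assume "i \<notin> C"
  then have "C = {a, b}"
    using assms by (intro card_2_eqI) auto
  show False
  proof (cases "i \<in> D")
    case False
    then have "D = {a, b}"
      using assms by (intro card_2_eqI) auto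
    with \<open>C = {a, b}\<close> \<open>C \<noteq> D\<close> show False
      by simp
  next
    case True
    with \<open>card D = 2\<close> obtain d where "D = {i, d}" "d \<noteq> i"
      by (rule card_2_obtain_other)
    then show False
      using assms \<open>i \<notin> C\<close> \<open>C = {a, b}\<close> by auto
  qed
qed

text \<open>
  Pairwise intersecting 2-sets share a point unless they form a triangle, which has only three
  sides.
\<close>

lemma doubletons_pairwise_intersecting_common:
  assumes "distinct [A, B, C, D]" "\<forall>X\<in>{A, B, C, D}. card X = 2"
    and "\<forall>X\<in>{A, B, C, D}. \<forall>Y\<in>{A, B, C, D}. X \<inter> Y \<noteq> {}"
  shows "\<exists>j. \<forall>X\<in>{A, B, C, D}. j \<in> X"
proof -
  obtain i where "i \<in> A" "i \<in> B"
    using assms(3) by blast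
  have "card A = 2" "card B = 2"
    using assms(2) by simp_all
  obtain a where a: "A = {i, a}" "a \<noteq> i"
    using \<open>card A = 2\<close> \<open>i \<in> A\<close> by (rule card_2_obtain_other)
  obtain b where b: "B = {i, b}" "b \<noteq> i"
    using \<open>card B = 2\<close> \<open>i \<in> B\<close> by (rule card_2_obtain_other)
  have "a \<noteq> b"
    using a b assms(1) by auto
  have "C \<inter> A \<noteq> {}" "C \<inter> B \<noteq> {}" "D \<inter> A \<noteq> {}" "D \<inter> B \<noteq> {}" "C \<inter> D \<noteq> {}" "D \<inter> C \<noteq> {}"
    using assms(3) by blast+
  then have "i \<in> C" "i \<in> D"
    using triangle_third_side[OF a(1) b(1) \<open>a \<noteq> b\<close> a(2) b(2)] assms(1,2) by auto
  then show ?thesis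
    using \<open>i \<in> A\<close> \<open>i \<in> B\<close> by blast
qed

lemma four_others:
  assumes "i \<in> {1..5::nat}"
  obtains a b c d where "distinct [i, a, b, c, d]" "{1..5} - {i} = {a, b, c, d}"
proof -
  have "card ({1..5::nat} - {i}) = 4"
    using assms by simp
  then obtain a where a: "a \<in> {1..5::nat} - {i}"
    by (metis card.empty ex_in_conv zero_neq_numeral)
  have "card ({1..5::nat} - {i} - {a}) = 3"
    using \<open>card ({1..5} - {i}) = 4\<close> a by simp
  then obtain b c d where bcd: "{1..5::nat} - {i} - {a} = {b, c, d}" "b \<noteq> c" "b \<noteq> d" "c \<noteq> d"
    by (auto simp: card_3_iff)
  have "{1..5} - {i} = insert a ({1..5::nat} - {i} - {a})"
    using a by blast
  also have "\<dots> = {a, b, c, d}"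
    using bcd(1) by simp
  finally have eq: "{1..5} - {i} = {a, b, c, d}" .
  moreover have "distinct [i, a, b, c, d]"
    using eq bcd a by (simp; blast)
  ultimately show ?thesis
    using that by blast
qed

lemma two_others:
  assumes "i \<in> {1..5::nat}" "k \<in> {1..5::nat}" "i \<noteq> k"
  obtains l m where "l \<in> {1..5}" "m \<in> {1..5}" "distinct [i, k, l, m]"
proof -
  have "card ({1..5::nat} - {i, k}) = 3"
    using assms by (simp add: card_Diff_subset)
  then obtain l m r where lmr: "{1..5::nat} - {i, k} = {l, m, r}" "l \<noteq> m"
    by (auto simp: card_3_iff)
  then have "l \<in> {1..5} - {i, k}" "m \<in> {1..5} - {i, k}"
    by blast+
  then show ?thesis
    using assms(3) lmr(2) by (intro that[of l m]) auto
qed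

locale petersen_automorphism =
  fixes \<phi> :: "vert \<Rightarrow> vert"
  assumes maps_PV: "A \<in> PV \<Longrightarrow> \<phi> A \<in> PV"
    and inj_on_PV: "inj_on \<phi> PV"
    and disjoint_iff: "A \<in> PV \<Longrightarrow> B \<in> PV \<Longrightarrow> \<phi> A \<inter> \<phi> B = {} \<longleftrightarrow> A \<inter> B = {}"
begin

text \<open>
  The inducing permutation sends \<open>i\<close> to the common point of the images of the four vertices
  containing \<open>i\<close>.
\<close>

lemma star_image_common_point:
  assumes "i \<in> {1..5}"
  shows "\<exists>j. \<forall>k\<in>{1..5}. k \<noteq> i \<longrightarrow> j \<in> \<phi> {i, k}"
proof -
  obtain a b c d where abcd: "distinct [i, a, b, c, d]" "{1..5} - {i} = {a, b, c, d}"
    using assms by (rule four_others)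
  let ?S = "[{i, a}, {i, b}, {i, c}, {i, d}]"
  have "a \<in> {1..5}" "b \<in> {1..5}" "c \<in> {1..5}" "d \<in> {1..5}"
    using abcd(2) by blast+
  then have S: "set ?S \<subseteq> PV"
    using assms abcd(1) by (simp add: doubleton_in_PV)
  have "distinct ?S"
    using abcd(1) by (simp add: doubleton_eq_iff)
  then have "distinct (map \<phi> ?S)"
    using inj_on_subset[OF inj_on_PV S] by (simp only: distinct_map)
  moreover have "\<forall>X\<in>\<phi> ` set ?S. card X = 2"
    using S maps_PV by (auto simp: PV_def)
  moreover have "\<phi> A \<inter> \<phi> B \<noteq> {}" if "A \<in> set ?S" "B \<in> set ?S" for A B
  proof -
    have "A \<inter> B \<noteq> {}"
      using that by auto
    then show ?thesis
      using disjoint_iff[of A B] S that by blast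
  qed
  then have "\<forall>X\<in>\<phi> ` set ?S. \<forall>Y\<in>\<phi> ` set ?S. X \<inter> Y \<noteq> {}"
    by blast
  ultimately obtain j where "\<forall>X\<in>\<phi> ` set ?S. j \<in> X"
    using doubletons_pairwise_intersecting_common[of "\<phi> {i, a}" "\<phi> {i, b}" "\<phi> {i, c}" "\<phi> {i, d}"]
    by auto
  then show ?thesis
    using abcd(2) by auto
qed

definition center :: "nat \<Rightarrow> nat" where
  "center i = (if i \<in> {1..5} then SOME j. \<forall>k\<in>{1..5}. k \<noteq> i \<longrightarrow> j \<in> \<phi> {i, k} else i)"

lemma center_mem_image:
  assumes "i \<in> {1..5}" "k \<in> {1..5}" "k \<noteq> i"
  shows "center i \<in> \<phi> {i, k}"
  using someI_ex[OF star_image_common_point[OF assms(1)]] assms by (simp add: center_def)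

lemma center_in_range:
  assumes "i \<in> {1..5}"
  shows "center i \<in> {1..5}"
proof -
  define k :: nat where "k = (if i = 1 then 2 else 1)"
  have "k \<in> {1..5}" "k \<noteq> i"
    by (auto simp: k_def)
  then have "center i \<in> \<phi> {i, k}" "\<phi> {i, k} \<in> PV"
    using assms by (simp_all add: center_mem_image maps_PV doubleton_in_PV)
  then show ?thesis
    by (auto simp: PV_def)
qed

lemma inj_on_center: "inj_on center {1..5}"
proof (rule inj_onI, rule ccontr)
  fix i k :: nat
  assume ik: "i \<in> {1..5}" "k \<in> {1..5}" "center i = center k" "i \<noteq> k"
  obtain l m where lm: "l \<in> {1..5}" "m \<in> {1..5}" "distinct [i, k, l, m]"
    using ik(1,2,4) by (rule two_others)
  then have "{i, l} \<in> PV" "{k, m} \<in> PV" "{i, l} \<inter> {k, m} = {}"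
    using ik by (auto simp: doubleton_in_PV)
  then have "\<phi> {i, l} \<inter> \<phi> {k, m} = {}"
    using disjoint_iff by blast
  moreover have "center i \<in> \<phi> {i, l}" "center k \<in> \<phi> {k, m}"
    using ik(1,2) lm by (simp_all add: center_mem_image)
  ultimately show False
    using ik(3) by (metis IntI empty_iff)
qed

lemma center_permutes: "center permutes {1..5}"
proof (rule bij_imp_permutes)
  have "center ` {1..5} = {1..5}"
    using center_in_range by (intro endo_inj_surj inj_on_center) auto
  then show "bij_betw center {1..5} {1..5}"
    using inj_on_center by (simp add: bij_betw_def)
qed (simp only: center_def if_False)

lemma image_eq_center_image:
  assumes "A \<in> PV"
  shows "\<phi> A = center ` A"
proof -
  obtain i k where A: "A = {i, k}" "i \<noteq> k"
    using assms by (auto simp: PV_def card_2_iff)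
  then have ik: "i \<in> {1..5}" "k \<in> {1..5}"
    using assms by (auto simp: PV_def)
  have "center i \<in> \<phi> {i, k}" "center k \<in> \<phi> {k, i}"
    using ik A(2) by (simp_all add: center_mem_image)
  moreover have "center i \<noteq> center k"
    using inj_onD[OF inj_on_center _ ik] A(2) by blast
  moreover have "card (\<phi> A) = 2"
    using maps_PV[OF assms] by (simp add: PV_def)
  ultimately have "\<phi> A = {center i, center k}"
    using A(1) by (intro card_2_eqI) (simp_all add: insert_commute)
  then show ?thesis
    using A by simp
qed

lemma induced_by_permutation: "\<exists>\<pi>. \<pi> permutes {1..5::nat} \<and> (\<forall>A\<in>PV. \<phi> A = \<pi> ` A)"
  using center_permutes image_eq_center_image by blast

end

section \<open>Averaging over automorphisms\<close>

definition verts :: "vert list" where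
  "verts = (SOME vs. distinct vs \<and> set vs = PV)"

lemma distinct_verts: "distinct verts" and set_verts: "set verts = PV"
proof -
  have "\<exists>vs. distinct vs \<and> set vs = PV"
    using finite_distinct_list[OF finite_PV] by blast
  then have "distinct verts \<and> set verts = PV"
    unfolding verts_def by (rule someI_ex)
  then show "distinct verts" "set verts = PV"
    by simp_all
qed

definition vert_index :: "vert \<Rightarrow> nat" where
  "vert_index = the_inv_into {..<length verts} ((!) verts)"

lemma bij_betw_nth_verts: "bij_betw ((!) verts) {..<length verts} PV"
  by (rule bij_betw_nth[OF distinct_verts refl set_verts[symmetric]])

lemma vert_index_less: "v \<in> PV \<Longrightarrow> vert_index v < length verts"
  using bij_betw_apply[OF bij_betw_the_inv_into[OF bij_betw_nth_verts]] by (simp add: vert_index_def)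

lemma nth_vert_index: "v \<in> PV \<Longrightarrow> verts ! vert_index v = v"
  unfolding vert_index_def by (rule f_the_inv_into_f_bij_betw[OF bij_betw_nth_verts])

lemma vert_index_eq_iff: "u \<in> PV \<Longrightarrow> v \<in> PV \<Longrightarrow> vert_index u = vert_index v \<longleftrightarrow> u = v"
  by (metis nth_vert_index)

text \<open>
  A word \<open>z\<close> of length \<open>|V|\<close> encodes the map \<open>A \<mapsto> z ! vert_index A\<close>; it is an automorphism
  word if this map is injective and preserves adjacency, which is checked pair by pair.
\<close>

definition respects_pair :: "nat \<Rightarrow> nat \<Rightarrow> vert list \<Rightarrow> bool" where
  "respects_pair p q z \<longleftrightarrow> z ! p \<noteq> z ! q \<and> (z ! p \<inter> z ! q = {} \<longleftrightarrow> verts ! p \<inter> verts ! q = {})"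

definition automorphism_word :: "vert list \<Rightarrow> bool" where
  "automorphism_word z \<longleftrightarrow> z \<in> words (length verts) \<and>
    (\<forall>p q. p < q \<longrightarrow> q < length verts \<longrightarrow> respects_pair p q z)"

lemma automorphism_word_respects_pair:
  assumes "automorphism_word z" "p < length verts" "q < length verts" "p \<noteq> q"
  shows "respects_pair p q z"
proof (cases "p < q")
  case False
  then have "respects_pair q p z"
    using assms unfolding automorphism_word_def by simp
  then show ?thesis
    by (auto simp: respects_pair_def Int_commute)
qed (use assms in \<open>simp add: automorphism_word_def\<close>)

lemma automorphism_word_petersen_automorphism:
  assumes "automorphism_word z"
  shows "petersen_automorphism (\<lambda>A. z ! vert_index A)"
proof
  have z: "z \<in> words (length verts)"
    using assms by (simp add: automorphism_word_def)
  show mem: "z ! vert_index A \<in> PV" if "A \<in> PV" for A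
    using z vert_index_less[OF that] by (auto simp: words_def)
  have pair: "respects_pair (vert_index A) (vert_index B) z" if "A \<in> PV" "B \<in> PV" "A \<noteq> B" for A B
    using that by (intro automorphism_word_respects_pair assms vert_index_less)
      (simp_all add: vert_index_eq_iff)
  show "inj_on (\<lambda>A. z ! vert_index A) PV"
    using pair by (auto intro!: inj_onI simp: respects_pair_def)
  show "z ! vert_index A \<inter> z ! vert_index B = {} \<longleftrightarrow> A \<inter> B = {}" if "A \<in> PV" "B \<in> PV" for A B
  proof (cases "A = B")
    case True
    then show ?thesis
      using that mem PV_not_empty by simp
  next
    case False
    then show ?thesis
      using pair[OF that False] that by (simp add: respects_pair_def nth_vert_index)
  qed
qed

lemma automorphism_word_verts: "automorphism_word verts"
  using distinct_verts set_verts
  by (auto simp: automorphism_word_def respects_pair_def words_def nth_eq_iff_index_eq)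

definition Adj :: tensor where
  "Adj = (\<lambda>xs. if xs \<in> words 2 \<and> xs ! 0 \<inter> xs ! 1 = {} then 1 else 0)"

definition Nadj :: tensor where
  "Nadj = (\<lambda>xs. if xs \<in> words 2 \<and> xs ! 0 \<noteq> xs ! 1 \<and> xs ! 0 \<inter> xs ! 1 \<noteq> {} then 1 else 0)"

lemma map_inv_image_in_words_iff:
  "\<pi> permutes {1..5::nat} \<Longrightarrow> map ((`) (inv \<pi>)) xs \<in> words n \<longleftrightarrow> xs \<in> words n"
  by (auto simp: words_def inv_image_in_PV_iff)

lemma Adj_in_PS5: "Adj \<in> PS5 2" and Nadj_in_PS5: "Nadj \<in> PS5 2"
proof -
  have "act \<pi> Adj xs = Adj xs \<and> act \<pi> Nadj xs = Nadj xs" if \<pi>: "\<pi> permutes {1..5::nat}" for \<pi> xs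
  proof (cases "xs \<in> words 2")
    case True
    have inj: "inj (inv \<pi>)"
      using permutes_inj[OF permutes_inv[OF \<pi>]] .
    then have "inv \<pi> ` x = inv \<pi> ` y \<longleftrightarrow> x = y" "inv \<pi> ` x \<inter> inv \<pi> ` y = {} \<longleftrightarrow> x \<inter> y = {}" for x y
      by (simp_all add: inj_image_eq_iff flip: image_Int)
    moreover have "length xs = 2"
      using True by (simp add: words_def)
    ultimately show ?thesis
      using True \<pi> by (simp add: act_def Adj_def Nadj_def map_inv_image_in_words_iff)
  next
    case False
    then show ?thesis
      using \<pi> by (simp add: act_def Adj_def Nadj_def map_inv_image_in_words_iff)
  qed
  then show "Adj \<in> PS5 2" "Nadj \<in> PS5 2"
    by (auto simp: PS5_def Adj_def Nadj_def in_Pn_iff)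
qed

definition pair_tensor :: "nat \<Rightarrow> nat \<Rightarrow> tensor" where
  "pair_tensor p q = (if verts ! p \<inter> verts ! q = {} then Adj else Nadj)"

lemma pair_tensor_apply:
  assumes "y \<in> words n" "p < n" "q < n"
  shows "pair_tensor p q [y ! q, y ! p] = (if respects_pair p q y then 1 else 0)"
proof -
  have "y ! p \<in> PV" "y ! q \<in> PV"
    using assms by (auto simp: words_def)
  then have "y ! p \<inter> y ! q = {} \<Longrightarrow> y ! p \<noteq> y ! q"
    using PV_not_empty by auto
  then show ?thesis
    using \<open>y ! p \<in> PV\<close> \<open>y ! q \<in> PV\<close>
    by (auto simp: pair_tensor_def Adj_def Nadj_def respects_pair_def words_def Int_commute)
qed

definition pairs_indicator :: "(nat \<times> nat) set \<Rightarrow> tensor" where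
  "pairs_indicator P = (\<lambda>z. if z \<in> words (length verts) \<and> (\<forall>(p, q)\<in>P. respects_pair p q z) then 1 else 0)"

lemma pairs_indicator_all_pairs:
  "pairs_indicator {(p, q). p < q \<and> q < length verts} = (\<lambda>z. if automorphism_word z then 1 else 0)"
  by (auto simp: fun_eq_iff pairs_indicator_def automorphism_word_def)

definition orbit_indicator :: "vert list \<Rightarrow> nat \<Rightarrow> tensor" where
  "orbit_indicator x k = (\<lambda>zs. if zs \<in> words (length verts + k) \<and> automorphism_word (take (length verts) zs)
      \<and> (\<forall>i<k. zs ! (length verts + i) = zs ! vert_index (x ! i)) then 1 else 0)"

text \<open>\<open>orbit_count x y\<close> is the number of automorphisms mapping the word \<open>x\<close> to \<open>y\<close>.\<close>

definition orbit_count :: "vert list \<Rightarrow> tensor" where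
  "orbit_count x = (\<lambda>y. \<Sum>z\<in>words (length verts). orbit_indicator x (length x) (z @ y))"

lemma orbit_indicator_append:
  assumes "z \<in> words (length verts)" "x \<in> words n"
  shows "orbit_indicator x n (z @ y) = (if y \<in> words n \<and> automorphism_word z
      \<and> (\<forall>i<n. y ! i = z ! vert_index (x ! i)) then 1 else 0)"
proof -
  have "length z = length verts"
    using assms(1) by (simp add: words_def)
  moreover have "vert_index (x ! i) < length verts" if "i < n" for i
    using assms(2) that by (intro vert_index_less) (auto simp: words_def)
  ultimately have "(\<forall>i<n. (z @ y) ! (length verts + i) = (z @ y) ! vert_index (x ! i))
      \<longleftrightarrow> (\<forall>i<n. y ! i = z ! vert_index (x ! i))"
    by (simp add: nth_append)
  moreover have "z @ y \<in> words (length verts + n) \<longleftrightarrow> y \<in> words n"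
    using assms(1) by (auto simp: words_def)
  ultimately show ?thesis
    using \<open>length z = length verts\<close> by (simp add: orbit_indicator_def)
qed

lemma automorphism_word_sum_delta:
  assumes "T \<in> PS5 n" "y \<in> words n" "automorphism_word z"
  shows "(\<Sum>x\<in>words n. if \<forall>i<n. y ! i = z ! vert_index (x ! i) then T x else 0) = T y"
proof -
  obtain \<pi> where \<pi>: "\<pi> permutes {1..5::nat}" and z: "\<forall>A\<in>PV. z ! vert_index A = \<pi> ` A"
    using petersen_automorphism.induced_by_permutation[OF automorphism_word_petersen_automorphism[OF assms(3)]]
    by blast
  define x0 where "x0 = map ((`) (inv \<pi>)) y"
  have "x0 \<in> words n"
    using assms(2) \<pi> by (simp add: x0_def map_inv_image_in_words_iff)
  have "(\<forall>i<n. y ! i = z ! vert_index (x ! i)) \<longleftrightarrow> x = x0" if x: "x \<in> words n" for x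
  proof -
    have "x ! i \<in> PV" if "i < n" for i
      using x that by (auto simp: words_def)
    then have "z ! vert_index (x ! i) = \<pi> ` (x ! i)" if "i < n" for i
      using z that by blast
    then have "(\<forall>i<n. y ! i = z ! vert_index (x ! i)) \<longleftrightarrow> (\<forall>i<n. y ! i = \<pi> ` (x ! i))"
      by simp
    also have "\<dots> \<longleftrightarrow> (\<forall>i<n. x ! i = inv \<pi> ` (y ! i))"
      using \<pi> by (auto simp: image_comp permutes_inverses comp_def)
    also have "\<dots> \<longleftrightarrow> x = x0"
      using x assms(2) by (auto simp: x0_def words_def list_eq_iff_nth_eq)
    finally show ?thesis .
  qed
  then have "(\<Sum>x\<in>words n. if \<forall>i<n. y ! i = z ! vert_index (x ! i) then T x else 0)
      = (\<Sum>x\<in>words n. if x = x0 then T x else 0)"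
    by (intro sum.cong) simp_all
  also have "\<dots> = T x0"
    using \<open>x0 \<in> words n\<close> finite_words by simp
  also have "\<dots> = act \<pi> T y"
    by (simp add: act_def x0_def)
  also have "\<dots> = T y"
    using assms(1) \<pi> by (simp add: PS5_def)
  finally show ?thesis .
qed

definition automorphism_count :: complex where
  "automorphism_count = of_nat (card {z. automorphism_word z})"

lemma finite_automorphism_words: "finite {z. automorphism_word z}"
  by (rule finite_subset[OF _ finite_words]) (auto simp: automorphism_word_def)

lemma automorphism_count_nonzero: "automorphism_count \<noteq> 0"
  using automorphism_word_verts finite_automorphism_words
  by (auto simp: automorphism_count_def card_eq_0_iff)

lemma PS5_decomposition:
  assumes "T \<in> PS5 n"
  shows "T = (\<lambda>y. \<Sum>x\<in>words n. (T x / automorphism_count) * orbit_count x y)"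
proof
  fix y
  show "T y = (\<Sum>x\<in>words n. (T x / automorphism_count) * orbit_count x y)"
  proof (cases "y \<in> words n")
    case False
    then have "T y = 0"
      using assms by (simp add: PS5_def in_Pn_iff)
    moreover have "orbit_count x y = 0" if "x \<in> words n" for x
      using that False by (simp add: orbit_count_def orbit_indicator_append length_in_words)
    ultimately show ?thesis
      by simp
  next
    case True
    have count: "orbit_count x y = (\<Sum>z\<in>words (length verts).
        if automorphism_word z \<and> (\<forall>i<n. y ! i = z ! vert_index (x ! i)) then 1 else 0)"
      if "x \<in> words n" for x
      using that True by (simp add: orbit_count_def orbit_indicator_append length_in_words)
    have "(\<Sum>x\<in>words n. T x * orbit_count x y)
        = (\<Sum>z\<in>words (length verts). \<Sum>x\<in>words n.
            if automorphism_word z \<and> (\<forall>i<n. y ! i = z ! vert_index (x ! i)) then T x else 0)"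
      by (simp add: count sum_distrib_left if_distrib sum.swap[of _ "words n"] cong: if_cong)
    also have "\<dots> = (\<Sum>z\<in>words (length verts). if automorphism_word z then T y else 0)"
      using automorphism_word_sum_delta[OF assms True] by (intro sum.cong) simp_all
    also have "\<dots> = automorphism_count * T y"
      using finite_words by (simp add: automorphism_count_def sum.If_cases automorphism_word_def Int_def)
    finally show ?thesis
      using automorphism_count_nonzero by (simp add: sum_divide_distrib[symmetric] field_simps)
  qed
qed

lemma copy_slot_orbit_indicator:
  assumes "k < length x" "set x \<subseteq> PV"
  shows "copy_slot (length verts + k) (vert_index (x ! k)) (orbit_indicator x k) = orbit_indicator x (Suc k)"
proof
  fix zs :: "vert list"
  let ?L = "length verts"
  have index_less: "vert_index (x ! i) < ?L" if "i < length x" for i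
    using assms(2) that by (intro vert_index_less) auto
  show "copy_slot (?L + k) (vert_index (x ! k)) (orbit_indicator x k) zs = orbit_indicator x (Suc k) zs"
  proof (cases "zs \<in> words (Suc (?L + k))")
    case True
    then have len: "length zs = Suc (?L + k)"
      by (rule length_in_words)
    then have "butlast zs \<in> words (?L + k)"
      using True by (auto simp: words_def dest: in_set_butlastD)
    moreover have "take ?L (butlast zs) = take ?L zs"
      using len by (simp add: take_butlast)
    moreover have "butlast zs ! (?L + i) = zs ! (?L + i)" "butlast zs ! vert_index (x ! i) = zs ! vert_index (x ! i)"
      if "i < k" for i
      using len that index_less[of i] assms(1) by (simp_all add: nth_butlast)
    moreover have "last zs = zs ! (?L + k)"
      using len last_conv_nth[of zs] by fastforce
    moreover have "(\<forall>i<Suc k. P i) \<longleftrightarrow> (\<forall>i<k. P i) \<and> P k" for P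
      by (auto simp: less_Suc_eq)
    ultimately show ?thesis
      using True index_less assms(1) by (simp add: copy_slot_def orbit_indicator_def)
  qed (simp add: copy_slot_def orbit_indicator_def)
qed

locale petersen_family = ghz_symmetric_family +
  assumes gen_Adj: "gen X 2 Adj" and gen_Nadj: "gen X 2 Nadj"
begin

lemma gen_pairs_indicator:
  assumes "finite P" "\<forall>(p, q)\<in>P. p < length verts \<and> q < length verts"
  shows "gen X (length verts) (pairs_indicator P)"
  using assms
proof (induction P rule: finite_induct)
  case empty
  have "pairs_indicator {} = ones (length verts)"
    by (simp add: fun_eq_iff pairs_indicator_def ones_def)
  then show ?case
    by (simp add: gen_ones)
next
  case (insert pq P)
  obtain p q where pq: "pq = (p, q)" "p < length verts" "q < length verts"
    using insert.prems by (cases pq) auto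
  have "gen X (length verts) (\<lambda>y. pairs_indicator P y * pair_tensor p q [y ! q, y ! p])"
    using insert pq gen_Adj gen_Nadj by (intro gen_mult_slots) (simp_all add: pair_tensor_def)
  moreover have "pairs_indicator P y * pair_tensor p q [y ! q, y ! p] = pairs_indicator (insert pq P) y" for y
    using pq by (cases "y \<in> words (length verts)") (simp_all add: pairs_indicator_def pair_tensor_apply)
  ultimately show ?case
    by simp
qed

lemma gen_orbit_indicator:
  assumes "set x \<subseteq> PV" "k \<le> length x"
  shows "gen X (length verts + k) (orbit_indicator x k)"
  using assms(2)
proof (induction k)
  case 0
  have "orbit_indicator x 0 zs = pairs_indicator {(p, q). p < q \<and> q < length verts} zs" for zs
    by (cases "zs \<in> words (length verts)")
      (simp_all add: orbit_indicator_def pairs_indicator_all_pairs automorphism_word_def length_in_words)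
  then have "orbit_indicator x 0 = pairs_indicator {(p, q). p < q \<and> q < length verts}" ..
  moreover have "finite {(p, q). p < q \<and> q < length verts}"
    by (rule finite_subset[of _ "{..<length verts} \<times> {..<length verts}"]) auto
  ultimately show ?case
    by (simp add: gen_pairs_indicator)
next
  case (Suc k)
  have "vert_index (x ! k) < length verts"
    using Suc.prems assms(1) by (intro vert_index_less) auto
  then have "gen X (Suc (length verts + k)) (copy_slot (length verts + k) (vert_index (x ! k)) (orbit_indicator x k))"
    using Suc by (intro gen_copy_slot) simp_all
  then show ?case
    using Suc.prems assms(1) by (simp add: copy_slot_orbit_indicator)
qed

lemma gen_orbit_count:
  assumes "x \<in> words n"
  shows "gen X n (orbit_count x)"
proof -
  have "gen X (length verts + n) (orbit_indicator x (length x))"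
    using gen_orbit_indicator[of x "length x"] assms by (simp add: words_def)
  then show ?thesis
    unfolding orbit_count_def by (rule gen_sum_prefix)
qed

lemma gen_PS5:
  assumes "T \<in> PS5 n"
  shows "gen X n T"
proof -
  have "gen X n (\<lambda>y. \<Sum>x\<in>words n. (T x / automorphism_count) * orbit_count x y)"
    by (rule gen_sum[OF finite_words gen_orbit_count])
  then show ?thesis
    using PS5_decomposition[OF assms] by simp
qed

end

definition generators :: "(nat \<times> tensor) set" where
  "generators = {(2, T) | T. T \<in> PS5 2} \<union> {(3, GHZ)}"

lemma Qfam_eq_gen: "Qfam n = {T. gen generators n T}"
  by (simp add: Qfam_def generators_def)

lemma generators_in_PS5: "(n, T) \<in> generators \<Longrightarrow> T \<in> PS5 n"
  using GHZ_in_PS5 by (auto simp: generators_def)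

theorem theorem5p3:
  shows "(\<forall>n. Qfam n = PS5 n) \<longleftrightarrow> Rt \<in> Qfam 4"
proof
  assume "\<forall>n. Qfam n = PS5 n"
  then show "Rt \<in> Qfam 4"
    using Rt_in_PS5 by simp
next
  assume R: "Rt \<in> Qfam 4"
  interpret petersen_family generators
  proof unfold_locales
    show "T \<in> Pn n" if "(n, T) \<in> generators" for n T
      using generators_in_PS5[OF that] by (simp add: PS5_def)
    show "(3, GHZ) \<in> generators"
      by (simp add: generators_def)
    show "gen generators 4 Rt"
      using R by (simp add: Qfam_eq_gen)
    show "gen generators 2 Adj" "gen generators 2 Nadj"
      using Adj_in_PS5 Nadj_in_PS5 by (auto simp: generators_def intro: gen_base)
  qed
  have "Qfam n = PS5 n" for n
    using gen_subset_PS5[OF generators_in_PS5] gen_PS5 unfolding Qfam_eq_gen by blast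
  then show "\<forall>n. Qfam n = PS5 n" ..
qed

end
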